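(* Let $\mathcal{X}$ and $\mathcal{Y}$ be finite sets, let $\Pr$ be a probability distribution on $\mathcal{X}$, let $\delta:\mathcal{X}\times\mathcal{Y}\to\mathbb{R}$, and let $\bar\pi,\pi_1,\dots,\pi_m$ be stochastic policies, each $\pi_i$ having support for $\bar\pi$ and satisfying $\sigma^2_\delta(\bar\pi\|\pi_i)>0$. Let $\mathcal{D}=\bigcup_{i=1}^m\mathcal{D}^i$ be a log dataset in which, for each $i$, $\mathcal{D}^i$ consists of $n_i\ge1$ samples $(x^i_j,y^i_j,\delta^i_j,p^i_j)$ with $x^i_j\sim\Pr$, $y^i_j\sim\pi_i(\cdot\mid x^i_j)$, $\delta^i_j=\delta(x^i_j,y^i_j)$, $p^i_j=\pi_i(y^i_j\mid x^i_j)$, all draws independent; let $n=\sum_in_i$. Define $$\hat U_{naive}(\bar\pi)=\frac1n\sum_{i=1}^m\sum_{j=1}^{n_i}\frac{\delta^i_j\bar\pi(y^i_j\mid x^i_j)}{p^i_j},\qquad \hat U_{weight}(\bar\pi)=\sum_{i=1}^m\lambda_i^*\sum_{j=1}^{n_i}\frac{\delta^i_j\bar\pi(y^i_j\mid x^i_j)}{p^i_j},$$ where $\lambda_i^*=\Big(\sigma^2_\delta(\bar\pi\|\pi_i)\sum_{j=1}^m\frac{n_j}{\sigma^2_\delta(\bar\pi\|\pi_j)}\Big)^{-1}$. Let $v_i=\sigma^2_\delta(\bar\pi\|\pi_i)/\sigma^2_\delta(\bar\pi\|\pi_m)$ and $r_i=n_i/n_m$. Then $$\gamma:=\frac{\mathrm{Var}_{\mathcal{D}}[\hat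 U_{weight}(\bar\pi)]}{\mathrm{Var}_{\mathcal{D}}[\hat U_{naive}(\bar\pi)]}=\frac{\big(\sum_{i=1}^m r_i\big)^2}{\big(\sum_{i=1}^m r_iv_i\big)\big(\sum_{i=1}^m \frac{r_i}{v_i}\big)}\le1.$$
   Context: A stochastic policy $\pi$ assigns to each $x\in\mathcal{X}$ a probability distribution $\pi(\cdot\mid x)$ on $\mathcal{Y}$. The utility is $U(\pi)=\sum_{x,y}\Pr(x)\pi(y\mid x)\delta(x,y)$. A policy $\pi$ has support for $\pi'$ if $\delta(x,y)\pi'(y\mid x)\neq0$ implies $\pi(y\mid x)>0$ for all $x,y$. For $\pi$ having support for $\bar\pi$, the divergence is $\sigma^2_\delta(\bar\pi\|\pi)=\mathrm{Var}_{x\sim\Pr,\,y\sim\pi(\cdot\mid x)}\big[\delta(x,y)\bar\pi(y\mid x)/\pi(y\mid x)\big]=\sum_{x,y}\frac{(\delta(x,y)\bar\pi(y\mid x))^2}{\pi(y\mid x)}\Pr(x)-U(\bar\pi)^2$. Variances are over the random draw of $\mathcal{D}$. *)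

theory Defs
  imports "HOL-Probability.Probability"
begin

text \<open>Stochastic policies are maps 'x => 'y pmf; pi(y|x) = pmf (pi x) y.
  Contexts are drawn from P :: 'x pmf; delta :: 'x => 'y => real.\<close>

definition sample_pmf :: "'x pmf \<Rightarrow> ('x \<Rightarrow> 'y pmf) \<Rightarrow> ('x \<times> 'y) pmf" where
  "sample_pmf P pol = do { x \<leftarrow> P; y \<leftarrow> pol x; return_pmf (x, y) }"

definition has_support_for :: "('x \<Rightarrow> 'y \<Rightarrow> real) \<Rightarrow> ('x \<Rightarrow> 'y pmf) \<Rightarrow> ('x \<Rightarrow> 'y pmf) \<Rightarrow> bool" where
  "has_support_for \<delta> pol pol' \<longleftrightarrow> (\<forall>x y. \<delta> x y * pmf (pol' x) y \<noteq> 0 \<longrightarrow> pmf (pol x) y > 0)"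

definition divergence :: "'x pmf \<Rightarrow> ('x \<Rightarrow> 'y \<Rightarrow> real) \<Rightarrow> ('x \<Rightarrow> 'y pmf) \<Rightarrow> ('x \<Rightarrow> 'y pmf) \<Rightarrow> real" where
  "divergence P \<delta> pibar pol =
     measure_pmf.variance (sample_pmf P pol) (\<lambda>(x, y). \<delta> x y * pmf (pibar x) y / pmf (pol x) y)"

text \<open>Log dataset: indexed by (i,j) with i < m, j < ns i; sample (i,j) is (x^i_j, y^i_j).
  The logged delta^i_j = delta(x,y) and propensity p^i_j = pol_i(y|x) are functions of (x,y).\<close>
definition log_index :: "nat \<Rightarrow> (nat \<Rightarrow> nat) \<Rightarrow> (nat \<times> nat) set" where
  "log_index m ns = {(i, j). i < m \<and> j < ns i}"

definition dataset_pmf :: "'x pmf \<Rightarrow> (nat \<Rightarrow> 'x \<Rightarrow> 'y pmf) \<Rightarrow> nat \<Rightarrow> (nat \<Rightarrow> nat)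
    \<Rightarrow> (nat \<times> nat \<Rightarrow> 'x \<times> 'y) pmf" where
  "dataset_pmf P pols m ns = Pi_pmf (log_index m ns) undefined (\<lambda>(i, j). sample_pmf P (pols i))"

definition ips_term :: "('x \<Rightarrow> 'y \<Rightarrow> real) \<Rightarrow> ('x \<Rightarrow> 'y pmf) \<Rightarrow> ('x \<Rightarrow> 'y pmf) \<Rightarrow> 'x \<times> 'y \<Rightarrow> real" where
  "ips_term \<delta> pibar pol s = (case s of (x, y) \<Rightarrow> \<delta> x y * pmf (pibar x) y / pmf (pol x) y)"

definition U_naive :: "('x \<Rightarrow> 'y \<Rightarrow> real) \<Rightarrow> ('x \<Rightarrow> 'y pmf) \<Rightarrow> (nat \<Rightarrow> 'x \<Rightarrow> 'y pmf) \<Rightarrow> nat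
    \<Rightarrow> (nat \<Rightarrow> nat) \<Rightarrow> (nat \<times> nat \<Rightarrow> 'x \<times> 'y) \<Rightarrow> real" where
  "U_naive \<delta> pibar pols m ns D =
     (1 / real (\<Sum>i<m. ns i)) * (\<Sum>i<m. \<Sum>j<ns i. ips_term \<delta> pibar (pols i) (D (i, j)))"

definition lambda_star :: "'x pmf \<Rightarrow> ('x \<Rightarrow> 'y \<Rightarrow> real) \<Rightarrow> ('x \<Rightarrow> 'y pmf) \<Rightarrow> (nat \<Rightarrow> 'x \<Rightarrow> 'y pmf)
    \<Rightarrow> nat \<Rightarrow> (nat \<Rightarrow> nat) \<Rightarrow> nat \<Rightarrow> real" where
  "lambda_star P \<delta> pibar pols m ns i =
     1 / (divergence P \<delta> pibar (pols i) * (\<Sum>j<m. real (ns j) / divergence P \<delta> pibar (pols j)))"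

definition U_weight :: "'x pmf \<Rightarrow> ('x \<Rightarrow> 'y \<Rightarrow> real) \<Rightarrow> ('x \<Rightarrow> 'y pmf) \<Rightarrow> (nat \<Rightarrow> 'x \<Rightarrow> 'y pmf) \<Rightarrow> nat
    \<Rightarrow> (nat \<Rightarrow> nat) \<Rightarrow> (nat \<times> nat \<Rightarrow> 'x \<times> 'y) \<Rightarrow> real" where
  "U_weight P \<delta> pibar pols m ns D =
     (\<Sum>i<m. lambda_star P \<delta> pibar pols m ns i * (\<Sum>j<ns i. ips_term \<delta> pibar (pols i) (D (i, j))))"

end

theory Submission
  imports Defs
begin

text \<open>The samples are independent, so the variance of any estimator of the form
  \<open>\<Sum>\<^sub>i c\<^sub>i \<Sum>\<^sub>j ips(x\<^sup>i\<^sub>j, y\<^sup>i\<^sub>j)\<close> is \<open>\<Sum>\<^sub>i n\<^sub>i c\<^sub>i\<^sup>2 \<sigma>\<^sub>i\<close>, where \<open>\<sigma>\<^sub>i\<close> is the divergence of \<open>\<pi>\<^sub>i\<close>.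
  This gives \<open>Var[U_naive] = (\<Sum> n\<^sub>i \<sigma>\<^sub>i) / n\<^sup>2\<close> and \<open>Var[U_weight] = 1 / (\<Sum> n\<^sub>i / \<sigma>\<^sub>i)\<close>, so
  \<open>\<gamma> = n\<^sup>2 / ((\<Sum> n\<^sub>i \<sigma>\<^sub>i)(\<Sum> n\<^sub>i / \<sigma>\<^sub>i))\<close>; this quotient is invariant under rescaling the
  \<open>n\<^sub>i\<close> and the \<open>\<sigma>\<^sub>i\<close>, and is at most 1 by the Cauchy-Schwarz inequality applied to
  \<open>\<surd>(n\<^sub>i \<sigma>\<^sub>i)\<close> and \<open>\<surd>(n\<^sub>i / \<sigma>\<^sub>i)\<close>.\<close>

lemma expectation_pair_pmf_mult:
  fixes f :: "'a \<Rightarrow> real" and g :: "'b \<Rightarrow> real"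
  assumes "finite (set_pmf p)" "finite (set_pmf q)"
  shows "measure_pmf.expectation (pair_pmf p q) (\<lambda>z. f (fst z) * g (snd z))
         = measure_pmf.expectation p f * measure_pmf.expectation q g"
proof -
  have "measure_pmf.expectation (pair_pmf p q) (\<lambda>z. f (fst z) * g (snd z))
      = (\<Sum>(a, b)\<in>set_pmf p \<times> set_pmf q. (f a * pmf p a) * (g b * pmf q b))"
    using assms by (subst integral_measure_pmf_real) (auto simp: pmf_pair intro!: sum.cong)
  also have "\<dots> = (\<Sum>a\<in>set_pmf p. f a * pmf p a) * (\<Sum>b\<in>set_pmf q. g b * pmf q b)"
    by (simp add: sum.cartesian_product[symmetric] sum_product)
  also have "\<dots> = measure_pmf.expectation p f * measure_pmf.expectation q g"
    using assms by (simp add: integral_measure_pmf_real)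
  finally show ?thesis .
qed

lemma variance_pair_pmf_add:
  fixes f :: "'a \<Rightarrow> real" and g :: "'b \<Rightarrow> real"
  assumes fin_p: "finite (set_pmf p)" and fin_q: "finite (set_pmf q)"
  shows "measure_pmf.variance (pair_pmf p q) (\<lambda>z. f (fst z) + g (snd z))
         = measure_pmf.variance p f + measure_pmf.variance q g"
proof -
  define a where "a = measure_pmf.expectation p f"
  define b where "b = measure_pmf.expectation q g"
  have "finite (set_pmf (pair_pmf p q))" using assms by simp
  note int = integrable_measure_pmf_finite[OF this]
  have mean: "measure_pmf.expectation (pair_pmf p q) (\<lambda>z. f (fst z) + g (snd z)) = a + b"
    by (subst Bochner_Integration.integral_add) (auto intro: int simp: a_def b_def)
  have centred: "measure_pmf.expectation p (\<lambda>x. f x - a) = 0"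
    using integrable_measure_pmf_finite[OF fin_p, of f]
    by (simp add: Bochner_Integration.integral_diff a_def)
  have "(\<lambda>z. (f (fst z) + g (snd z) - (a + b))\<^sup>2) =
        (\<lambda>z. ((f (fst z) - a)\<^sup>2 + (g (snd z) - b)\<^sup>2) + 2 * ((f (fst z) - a) * (g (snd z) - b)))"
    by (auto simp: fun_eq_iff power2_eq_square algebra_simps)
  then have "measure_pmf.variance (pair_pmf p q) (\<lambda>z. f (fst z) + g (snd z))
     = measure_pmf.expectation (pair_pmf p q) (\<lambda>z. (f (fst z) - a)\<^sup>2)
     + measure_pmf.expectation (pair_pmf p q) (\<lambda>z. (g (snd z) - b)\<^sup>2)
     + 2 * measure_pmf.expectation (pair_pmf p q) (\<lambda>z. (f (fst z) - a) * (g (snd z) - b))"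
    by (simp add: mean Bochner_Integration.integral_add int)
  also have "measure_pmf.expectation (pair_pmf p q) (\<lambda>z. (f (fst z) - a) * (g (snd z) - b)) = 0"
    using expectation_pair_pmf_mult[OF fin_p fin_q, of "\<lambda>x. f x - a" "\<lambda>y. g y - b"] centred
    by simp
  finally show ?thesis
    using expectation_pair_pmf_fst[of p q "\<lambda>x. (f x - a)\<^sup>2"]
      expectation_pair_pmf_snd[of p q "\<lambda>y. (g y - b)\<^sup>2"]
    by (simp add: a_def b_def)
qed

lemma variance_pmf_mult_const:
  fixes f :: "'a \<Rightarrow> real"
  shows "measure_pmf.variance p (\<lambda>x. c * f x) = c\<^sup>2 * measure_pmf.variance p f"
proof -
  have "(\<lambda>x. (c * f x - measure_pmf.expectation p (\<lambda>x. c * f x))\<^sup>2)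
      = (\<lambda>x. c\<^sup>2 * (f x - measure_pmf.expectation p f)\<^sup>2)"
    by (auto simp: fun_eq_iff power2_eq_square algebra_simps)
  then show ?thesis by simp
qed

lemma variance_Pi_pmf_sum:
  fixes f :: "'k \<Rightarrow> 'a \<Rightarrow> real"
  assumes "finite I" and fin: "\<And>k. finite (set_pmf (p k))"
  shows "measure_pmf.variance (Pi_pmf I d p) (\<lambda>h. \<Sum>k\<in>I. f k (h k))
         = (\<Sum>k\<in>I. measure_pmf.variance (p k) (f k))"
  using assms(1)
proof (induction I rule: finite_induct)
  case empty
  then show ?case by simp
next
  case (insert k A)
  have fin_A: "finite (set_pmf (Pi_pmf A d p))"
    using insert.hyps(1) fin by (simp add: set_Pi_pmf finite_PiE_dflt)
  have split: "(\<Sum>l\<in>insert k A. f l (if l = k then y else h l)) = f k y + (\<Sum>l\<in>A. f l (h l))"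
    for y h
  proof -
    have "(\<Sum>l\<in>A. f l (if l = k then y else h l)) = (\<Sum>l\<in>A. f l (h l))"
      using insert.hyps(2) by (intro sum.cong) auto
    then show ?thesis using insert.hyps by simp
  qed
  have "measure_pmf.variance (Pi_pmf (insert k A) d p) (\<lambda>h. \<Sum>l\<in>insert k A. f l (h l))
      = measure_pmf.variance (pair_pmf (p k) (Pi_pmf A d p))
          (\<lambda>z. f k (fst z) + (\<Sum>l\<in>A. f l (snd z l)))"
    by (simp add: Pi_pmf_insert[OF insert.hyps] split_beta split)
  also have "\<dots> = measure_pmf.variance (p k) (f k)
                  + measure_pmf.variance (Pi_pmf A d p) (\<lambda>h. \<Sum>l\<in>A. f l (h l))"
    by (rule variance_pair_pmf_add[OF fin fin_A])
  finally show ?case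
    using insert by simp
qed

lemma variance_ips_term:
  "measure_pmf.variance (sample_pmf P pol) (ips_term \<delta> pibar pol) = divergence P \<delta> pibar pol"
proof -
  have "ips_term \<delta> pibar pol = (\<lambda>(x, y). \<delta> x y * pmf (pibar x) y / pmf (pol x) y)"
    by (auto simp: fun_eq_iff ips_term_def)
  then show ?thesis by (simp add: divergence_def)
qed

lemma variance_dataset_weighted_sum:
  fixes P :: "('x::finite) pmf" and \<delta> :: "'x \<Rightarrow> ('y::finite) \<Rightarrow> real"
    and c :: "nat \<Rightarrow> real"
  shows "measure_pmf.variance (dataset_pmf P pols m ns)
           (\<lambda>D. \<Sum>i<m. c i * (\<Sum>j<ns i. ips_term \<delta> pibar (pols i) (D (i, j))))
         = (\<Sum>i<m. real (ns i) * (c i)\<^sup>2 * divergence P \<delta> pibar (pols i))"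
proof -
  define I where "I = log_index m ns"
  have I: "I = Sigma {..<m} (\<lambda>i. {..<ns i})" by (auto simp: I_def log_index_def)
  define p where "p = (\<lambda>(i::nat, j::nat). sample_pmf P (pols i))"
  have fin_p: "finite (set_pmf (p k))" for k
    by (rule finite_subset[OF subset_UNIV]) simp
  have estimator: "(\<Sum>i<m. c i * (\<Sum>j<ns i. ips_term \<delta> pibar (pols i) (D (i, j))))
      = (\<Sum>k\<in>I. c (fst k) * ips_term \<delta> pibar (pols (fst k)) (D k))" for D
    by (simp add: I sum_distrib_left sum.Sigma split_beta')
  have dataset: "dataset_pmf P pols m ns = Pi_pmf I undefined p"
    by (simp add: dataset_pmf_def I_def p_def)
  have "measure_pmf.variance (dataset_pmf P pols m ns)
           (\<lambda>D. \<Sum>i<m. c i * (\<Sum>j<ns i. ips_term \<delta> pibar (pols i) (D (i, j))))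
      = (\<Sum>k\<in>I. measure_pmf.variance (p k) (\<lambda>s. c (fst k) * ips_term \<delta> pibar (pols (fst k)) s))"
    unfolding estimator dataset
    by (rule variance_Pi_pmf_sum[where f = "\<lambda>k s. c (fst k) * ips_term \<delta> pibar (pols (fst k)) s"])
       (simp_all add: I fin_p)
  also have "\<dots> = (\<Sum>k\<in>I. (c (fst k))\<^sup>2 * divergence P \<delta> pibar (pols (fst k)))"
    by (intro sum.cong refl, subst variance_pmf_mult_const)
       (simp add: p_def split_beta variance_ips_term)
  also have "\<dots> = (\<Sum>i<m. real (ns i) * (c i)\<^sup>2 * divergence P \<delta> pibar (pols i))"
    using sum.Sigma[of "{..<m}" "\<lambda>i. {..<ns i}" "\<lambda>i j. (c i)\<^sup>2 * divergence P \<delta> pibar (pols i)"]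
    by (simp add: I split_beta mult.assoc)
  finally show ?thesis .
qed

lemma variance_U_naive:
  fixes P :: "('x::finite) pmf" and \<delta> :: "'x \<Rightarrow> ('y::finite) \<Rightarrow> real"
  shows "measure_pmf.variance (dataset_pmf P pols m ns) (U_naive \<delta> pibar pols m ns)
         = (\<Sum>i<m. real (ns i) * divergence P \<delta> pibar (pols i)) / (\<Sum>i<m. real (ns i))\<^sup>2"
proof -
  have "U_naive \<delta> pibar pols m ns = (\<lambda>D. \<Sum>i<m. 1 / real (\<Sum>i<m. ns i)
          * (\<Sum>j<ns i. ips_term \<delta> pibar (pols i) (D (i, j))))"
    by (simp add: U_naive_def fun_eq_iff sum_distrib_left)
  then show ?thesis
    by (simp only: variance_dataset_weighted_sum)
       (simp add: sum_divide_distrib power2_eq_square)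
qed

lemma variance_U_weight:
  fixes P :: "('x::finite) pmf" and \<delta> :: "'x \<Rightarrow> ('y::finite) \<Rightarrow> real"
  shows "measure_pmf.variance (dataset_pmf P pols m ns) (U_weight P \<delta> pibar pols m ns)
         = 1 / (\<Sum>i<m. real (ns i) / divergence P \<delta> pibar (pols i))"
proof -
  define S where "S = (\<Sum>i<m. real (ns i) / divergence P \<delta> pibar (pols i))"
  have "real (ns i) * (lambda_star P \<delta> pibar pols m ns i)\<^sup>2 * divergence P \<delta> pibar (pols i)
        = real (ns i) / divergence P \<delta> pibar (pols i) / S\<^sup>2" for i
    by (cases "divergence P \<delta> pibar (pols i) = 0")
       (simp_all add: lambda_star_def S_def field_simps power2_eq_square)
  then have "measure_pmf.variance (dataset_pmf P pols m ns) (U_weight P \<delta> pibar pols m ns)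
        = S / S\<^sup>2"
    unfolding U_weight_def variance_dataset_weighted_sum by (simp add: S_def sum_divide_distrib)
  then show ?thesis
    by (simp add: S_def power2_eq_square)
qed

definition variance_ratio :: "'a set \<Rightarrow> ('a \<Rightarrow> real) \<Rightarrow> ('a \<Rightarrow> real) \<Rightarrow> real" where
  "variance_ratio A w s = (\<Sum>i\<in>A. w i)\<^sup>2 / ((\<Sum>i\<in>A. w i * s i) * (\<Sum>i\<in>A. w i / s i))"

lemma variance_ratio_scale:
  assumes "a \<noteq> 0" "b \<noteq> 0"
  shows "variance_ratio A (\<lambda>i. w i / a) (\<lambda>i. s i / b) = variance_ratio A w s"
proof -
  have "(\<Sum>i\<in>A. w i / a * (s i / b)) = (\<Sum>i\<in>A. w i * s i) / (a * b)"
    by (simp add: sum_divide_distrib)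
  moreover have "(\<Sum>i\<in>A. w i / a / (s i / b)) = (\<Sum>i\<in>A. w i / s i) * (b / a)"
    unfolding sum_distrib_right by (rule sum.cong) auto
  ultimately show ?thesis
    using assms by (simp add: variance_ratio_def sum_divide_distrib[symmetric] power2_eq_square)
qed

lemma variance_ratio_le_1:
  assumes w: "\<And>i. i \<in> A \<Longrightarrow> w i \<ge> 0" and s: "\<And>i. i \<in> A \<Longrightarrow> s i > 0"
  shows "variance_ratio A w s \<le> 1"
proof -
  have "(\<Sum>i\<in>A. sqrt (w i * s i) * sqrt (w i / s i))\<^sup>2
        \<le> (\<Sum>i\<in>A. (sqrt (w i * s i))\<^sup>2) * (\<Sum>i\<in>A. (sqrt (w i / s i))\<^sup>2)"
    by (rule Cauchy_Schwarz_ineq_sum)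
  moreover have "sqrt (w i * s i) * sqrt (w i / s i) = w i" if "i \<in> A" for i
    using w[OF that] s[OF that] by (simp add: real_sqrt_mult[symmetric])
  ultimately have "(\<Sum>i\<in>A. w i)\<^sup>2 \<le> (\<Sum>i\<in>A. w i * s i) * (\<Sum>i\<in>A. w i / s i)"
    using w s by (simp add: less_imp_le)
  moreover have "0 \<le> (\<Sum>i\<in>A. w i * s i) * (\<Sum>i\<in>A. w i / s i)"
    using w s by (intro mult_nonneg_nonneg sum_nonneg) (simp_all add: less_imp_le)
  moreover have "x / y \<le> 1" if "x \<le> y" "0 \<le> y" for x y :: real
    using that by (cases "y = 0") (simp_all add: divide_le_eq_1)
  ultimately show ?thesis
    unfolding variance_ratio_def by blast
qed

theorem proposition6p5:
  fixes P :: "('x::finite) pmf"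
    and \<delta> :: "'x \<Rightarrow> ('y::finite) \<Rightarrow> real"
    and pibar :: "'x \<Rightarrow> 'y pmf"
    and pols :: "nat \<Rightarrow> 'x \<Rightarrow> 'y pmf"
    and m :: nat and ns :: "nat \<Rightarrow> nat"
  assumes m_pos: "m \<ge> 1"
    and supp: "\<And>i. i < m \<Longrightarrow> has_support_for \<delta> (pols i) pibar"
    and div_pos: "\<And>i. i < m \<Longrightarrow> divergence P \<delta> pibar (pols i) > 0"
    and ns_pos: "\<And>i. i < m \<Longrightarrow> ns i \<ge> 1"
  defines "v \<equiv> (\<lambda>i. divergence P \<delta> pibar (pols i) / divergence P \<delta> pibar (pols (m - 1)))"
    and "r \<equiv> (\<lambda>i. real (ns i) / real (ns (m - 1)))"
    and "\<gamma> \<equiv> measure_pmf.variance (dataset_pmf P pols m ns) (U_weight P \<delta> pibar pols m ns)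
              / measure_pmf.variance (dataset_pmf P pols m ns) (U_naive \<delta> pibar pols m ns)"
  shows "\<gamma> = (\<Sum>i<m. r i)\<^sup>2 / ((\<Sum>i<m. r i * v i) * (\<Sum>i<m. r i / v i)) \<and> \<gamma> \<le> 1"
proof -
  define \<sigma> where "\<sigma> = (\<lambda>i. divergence P \<delta> pibar (pols i))"
  define N where "N = (\<lambda>i. real (ns i))"
  have last: "m - 1 < m" using m_pos by simp
  have "\<gamma> = variance_ratio {..<m} N \<sigma>"
    by (simp add: \<gamma>_def variance_U_weight variance_U_naive variance_ratio_def N_def \<sigma>_def
        field_simps)
  moreover have "variance_ratio {..<m} N \<sigma> = variance_ratio {..<m} r v"
    using div_pos[OF last] ns_pos[OF last] unfolding r_def v_def
    by (simp add: variance_ratio_scale N_def \<sigma>_def)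
  moreover have "variance_ratio {..<m} N \<sigma> \<le> 1"
    by (rule variance_ratio_le_1) (simp_all add: N_def \<sigma>_def div_pos)
  ultimately show ?thesis
    by (simp add: variance_ratio_def)
qed

end
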